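(* Fix one of the ground state sequences (A) or (B) and $m\in\mathbb Z$. Let $b\in B_{\mathrm{aff}}$ satisfy $H(b\otimes b^\circ_m)\le0$. Then $G(b)\wedge|m\rangle=0$ in the Fock space $\mathcal F_{m-1}$ (i.e. the image in $\mathcal F_{m-1}$ of $G(b)\wedge\overline{|m\rangle}\in\bar{\mathcal F}_{m-1}$ vanishes; equivalently $G(b)\wedge\overline{|m\rangle}\in\bigcap_{n>0}q^nL(\bar{\mathcal F}_{m-1})$).
   Context: Let $\mathfrak g=\widehat{\mathfrak{sl}}_2$, $I=\{0,1\}$, weight lattice $P=\mathbb Z\Lambda_0\oplus\mathbb Z\Lambda_1\oplus\mathbb Z\delta$, coroots $h_0,h_1$ with $\langle h_i,\Lambda_j\rangle=\delta_{ij}$, $\langle h_i,\delta\rangle=0$, central element $c=h_0+h_1$. $U_q(\mathfrak g)$ is the quantum affine algebra over $\mathbb Q(q)$ with generators $e_i,f_i$ ($i\in I$), $q^h$ ($h\in P^*$), $t_i=q^{h_i}$, and coproduct $\Delta(q^h)=q^h\otimes q^h$, $\Delta(e_i)=e_i\otimes1+t_i^{-1}\otimes e_i$, $\Delta(f_i)=f_i\otimes t_i+1\otimes f_i$. $[n]=(q^n-q^{-n})/(q-q^{-1})$; $A\subset\mathbb Q(q)$ is the ring of rational functions regular at $q=0$. Let $J=\{0,1,2\}$. $V_{\mathrm{aff}}$ is the $\mathbb Q(q)$-space with basis $z^av_j$ ($a\in\mathbb Z$, $j\in J$), a $U_q(\mathfrak g)$-module via: $\mathrm{wt}(z^av_j)=2(1-j)(\Lambda_1-\Lambda_0)+a\delta$,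 $q^hz^av_j=q^{\langle h,\mathrm{wt}(z^av_j)\rangle}z^av_j$, $e_1z^av_j=[3-j]z^av_{j-1}$, $f_1z^av_j=[j+1]z^av_{j+1}$, $e_0z^av_j=[j+1]z^{a+1}v_{j+1}$, $f_0z^av_j=[3-j]z^{a-1}v_{j-1}$ (with $v_{-1}=v_3=0$). The operator $z^b$ sends $z^av_j\mapsto z^{a+b}v_j$. The crystal of $V_{\mathrm{aff}}$ is $B_{\mathrm{aff}}=\{z^ab_j\}$ with lower global base $G(z^ab_j)=z^av_j$; the energy function is $H(z^ab_i\otimes z^{a'}b_j)=\min\{i,2-j\}-a+a'$. $N\subset V_{\mathrm{aff}}\otimes V_{\mathrm{aff}}$ is the smallest subspace containing $v_0\otimes v_0$ that is stable under the action of $U_q(\mathfrak g)$ (via $\Delta$) and under the operators $z\otimes z$, $z^{-1}\otimes z^{-1}$, $z\otimes1+1\otimes z$. For $n\ge2$, $N_n=\sum_{r=0}^{n-2}V_{\mathrm{aff}}^{\otimes r}\otimes N\otimes V_{\mathrm{aff}}^{\otimes(n-r-2)}$, $\bigwedge^nV_{\mathrm{aff}}:=V_{\mathrm{aff}}^{\otimes n}/N_n$, and $L(\bigwedge^nV_{\mathrm{aff}})$ is the image of the $A$-lattice spanned by all $G(c_1)\otimes\cdots\otimes G(c_n)$, $c_r\in B_{\mathrm{aff}}$. Ground state sequences: (A) $b^\circ_m=zb_2$ for $m$ even, $b^\circ_m=b_0$ for $m$ odd; (B) $b^\circ_m=b_1$ for all $m$. Put $v^\circ_m=G(b^\circ_m)$.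 The pre-Fock space $\bar{\mathcal F}_m$ is the inductive limit of the spaces $\bigwedge^rV_{\mathrm{aff}}$ ($r\ge0$) along the maps $u\mapsto u\wedge v^\circ_{m+r}$; the image of $u\in\bigwedge^rV_{\mathrm{aff}}$ is written $u\wedge\overline{|m+r\rangle}$ (the formal semi-infinite wedge $u\wedge v^\circ_{m+r}\wedge v^\circ_{m+r+1}\wedge\cdots$), and $\overline{|m\rangle}$ is the image of $1\in\bigwedge^0V_{\mathrm{aff}}=\mathbb Q(q)$. $L(\bar{\mathcal F}_m)$ is the $A$-span of the images of the $L(\bigwedge^rV_{\mathrm{aff}})$. The Fock space is $\mathcal F_m=\bar{\mathcal F}_m/\bigcap_{n>0}q^nL(\bar{\mathcal F}_m)$, $|m\rangle$ is the image of $\overline{|m\rangle}$, $L(\mathcal F_m)$ is the image of $L(\bar{\mathcal F}_m)$, and $\mathcal F_m$ carries the $q$-adic topology with neighborhood basis of $0$ given by $\{q^nL(\mathcal F_m)\}_{n\ge0}$ (it is separated). *)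

theory Defs
  imports Main "HOL-Computational_Algebra.Polynomial" "HOL-Computational_Algebra.Fraction_Field"
begin

type_synonym K = "rat poly fract"

definition qq :: K where "qq = Fract [:0, 1:] 1"

definition Areg :: "K set" where
  "Areg = {x. \<exists>p r. x = Fract p r \<and> poly r 0 \<noteq> 0}"

definition qint :: "int \<Rightarrow> K" where
  "qint n = (qq powi n - qq powi (-n)) / (qq - inverse qq)"

text \<open>A basis element z^a v_j (or crystal element z^a b_j) is the pair (a,j), j in J={0,1,2}.
  A basis tensor G(c_1) (x) ... (x) G(c_n) is the list [c_1,...,c_n].
  A vector of V_aff^{(x)n} is its coefficient function on basis tensors.\<close>

type_synonym bas = "int \<times> nat"
type_synonym tens = "bas list \<Rightarrow> K"

definition valid :: "bas list \<Rightarrow> bool" where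
  "valid xs \<longleftrightarrow> (\<forall>x\<in>set xs. snd x \<le> 2)"

definition bt :: "bas list \<Rightarrow> tens" where
  "bt xs = (\<lambda>ys. if ys = xs then 1 else 0)"

definition tzero :: tens where "tzero = (\<lambda>_. 0)"
definition tadd :: "tens \<Rightarrow> tens \<Rightarrow> tens" where "tadd x y = (\<lambda>ys. x ys + y ys)"
definition tsub :: "tens \<Rightarrow> tens \<Rightarrow> tens" where "tsub x y = (\<lambda>ys. x ys - y ys)"
definition tscale :: "K \<Rightarrow> tens \<Rightarrow> tens" where "tscale c x = (\<lambda>ys. c * x ys)"

inductive_set span_over :: "K set \<Rightarrow> tens set \<Rightarrow> tens set" for R S where
  span_zero: "tzero \<in> span_over R S"
| span_base: "x \<in> S \<Longrightarrow> x \<in> span_over R S"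
| span_add: "x \<in> span_over R S \<Longrightarrow> y \<in> span_over R S \<Longrightarrow> tadd x y \<in> span_over R S"
| span_scale: "c \<in> R \<Longrightarrow> x \<in> span_over R S \<Longrightarrow> tscale c x \<in> span_over R S"

text \<open>Linear extension of a map given on basis tensors (all vectors used have finite support).\<close>
definition lin_ext :: "(bas list \<Rightarrow> tens) \<Rightarrow> tens \<Rightarrow> tens" where
  "lin_ext g x = (\<lambda>ys. \<Sum>zs\<in>{zs. x zs \<noteq> 0}. x zs * g zs ys)"

type_synonym vec1 = "bas \<Rightarrow> K"

definition d1 :: "bas \<Rightarrow> vec1" where "d1 b = (\<lambda>c. if c = b then 1 else 0)"
definition s1 :: "K \<Rightarrow> vec1 \<Rightarrow> vec1" where "s1 c v = (\<lambda>x. c * v x)"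

text \<open>h in P^* written as h = x0 h_0 + x1 h_1 + x2 d (coordinates dual to Lambda_0, Lambda_1, delta).\<close>
type_synonym coweight = "int \<times> int \<times> int"

text \<open>wt(z^a v_j) = 2(1-j)(Lambda_1 - Lambda_0) + a delta; pairing <h, wt>.\<close>
definition pair_wt :: "coweight \<Rightarrow> bas \<Rightarrow> int" where
  "pair_wt h b = (case h of (x0, x1, x2) \<Rightarrow> case b of (a, j) \<Rightarrow>
      x0 * (- 2 * (1 - int j)) + x1 * (2 * (1 - int j)) + x2 * a)"

definition hcor :: "nat \<Rightarrow> coweight" where
  "hcor i = (if i = 0 then (1, 0, 0) else (0, 1, 0))"

definition eV :: "nat \<Rightarrow> bas \<Rightarrow> vec1" where
  "eV i b = (case b of (a, j) \<Rightarrow>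
     if i = 1 then (if 1 \<le> j \<and> j \<le> 2 then s1 (qint (3 - int j)) (d1 (a, j - 1)) else (\<lambda>_. 0))
     else (if j < 2 then s1 (qint (int j + 1)) (d1 (a + 1, j + 1)) else (\<lambda>_. 0)))"

definition fV :: "nat \<Rightarrow> bas \<Rightarrow> vec1" where
  "fV i b = (case b of (a, j) \<Rightarrow>
     if i = 1 then (if j < 2 then s1 (qint (int j + 1)) (d1 (a, j + 1)) else (\<lambda>_. 0))
     else (if 1 \<le> j \<and> j \<le> 2 then s1 (qint (3 - int j)) (d1 (a - 1, j - 1)) else (\<lambda>_. 0)))"

definition tp2 :: "vec1 \<Rightarrow> vec1 \<Rightarrow> tens" where
  "tp2 u w = (\<lambda>ys. if length ys = 2 then u (ys ! 0) * w (ys ! 1) else 0)"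

text \<open>Delta(e_i) = e_i (x) 1 + t_i^{-1} (x) e_i\<close>
definition E2 :: "nat \<Rightarrow> bas list \<Rightarrow> tens" where
  "E2 i xs = (if length xs = 2 then
     tadd (tp2 (eV i (xs ! 0)) (d1 (xs ! 1)))
          (tscale (qq powi (- pair_wt (hcor i) (xs ! 0))) (tp2 (d1 (xs ! 0)) (eV i (xs ! 1))))
   else tzero)"

text \<open>Delta(f_i) = f_i (x) t_i + 1 (x) f_i\<close>
definition F2 :: "nat \<Rightarrow> bas list \<Rightarrow> tens" where
  "F2 i xs = (if length xs = 2 then
     tadd (tscale (qq powi (pair_wt (hcor i) (xs ! 1))) (tp2 (fV i (xs ! 0)) (d1 (xs ! 1))))
          (tp2 (d1 (xs ! 0)) (fV i (xs ! 1)))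
   else tzero)"

text \<open>Delta(q^h) = q^h (x) q^h\<close>
definition Q2 :: "coweight \<Rightarrow> bas list \<Rightarrow> tens" where
  "Q2 h xs = (if length xs = 2 then
     tscale (qq powi (pair_wt h (xs ! 0) + pair_wt h (xs ! 1))) (bt xs) else tzero)"

definition zz2 :: "int \<Rightarrow> bas list \<Rightarrow> tens" where
  "zz2 s xs = (if length xs = 2 then
     bt [(fst (xs ! 0) + s, snd (xs ! 0)), (fst (xs ! 1) + s, snd (xs ! 1))] else tzero)"

definition zsum2 :: "bas list \<Rightarrow> tens" where
  "zsum2 xs = (if length xs = 2 then
     tadd (bt [(fst (xs ! 0) + 1, snd (xs ! 0)), xs ! 1])
          (bt [xs ! 0, (fst (xs ! 1) + 1, snd (xs ! 1))]) else tzero)"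

text \<open>N: smallest subspace containing v_0 (x) v_0 stable under U_q(g) (generators e_i, f_i, q^h),
  z (x) z, z^{-1} (x) z^{-1} and z (x) 1 + 1 (x) z.\<close>
inductive_set Nsp :: "tens set" where
  N_gen: "bt [(0, 0), (0, 0)] \<in> Nsp"
| N_zero: "tzero \<in> Nsp"
| N_add: "x \<in> Nsp \<Longrightarrow> y \<in> Nsp \<Longrightarrow> tadd x y \<in> Nsp"
| N_scale: "x \<in> Nsp \<Longrightarrow> tscale c x \<in> Nsp"
| N_e: "i \<le> 1 \<Longrightarrow> x \<in> Nsp \<Longrightarrow> lin_ext (E2 i) x \<in> Nsp"
| N_f: "i \<le> 1 \<Longrightarrow> x \<in> Nsp \<Longrightarrow> lin_ext (F2 i) x \<in> Nsp"
| N_q: "x \<in> Nsp \<Longrightarrow> lin_ext (Q2 h) x \<in> Nsp"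
| N_z: "x \<in> Nsp \<Longrightarrow> lin_ext (zz2 1) x \<in> Nsp"
| N_zinv: "x \<in> Nsp \<Longrightarrow> lin_ext (zz2 (-1)) x \<in> Nsp"
| N_zsum: "x \<in> Nsp \<Longrightarrow> lin_ext zsum2 x \<in> Nsp"

text \<open>The vector G(x_1)(x)...(x)G(x_r) (x) u (x) G(y_1)(x)...(x)G(y_s) for u in V(x)V.\<close>
definition embed :: "bas list \<Rightarrow> tens \<Rightarrow> bas list \<Rightarrow> tens" where
  "embed xs u ys = (\<lambda>zs. if length zs = length xs + 2 + length ys \<and> take (length xs) zs = xs
       \<and> drop (length xs + 2) zs = ys then u (take 2 (drop (length xs) zs)) else 0)"

definition Nn :: "nat \<Rightarrow> tens set" where
  "Nn n = span_over UNIV {embed xs u ys | xs u ys. u \<in> Nsp \<and> valid xs \<and> valid ys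
                                \<and> length xs + 2 + length ys = n}"

definition Ltens :: "nat \<Rightarrow> tens set" where
  "Ltens n = span_over Areg {bt cs | cs. length cs = n \<and> valid cs}"

datatype gseq = GS_A | GS_B

definition bcirc :: "gseq \<Rightarrow> int \<Rightarrow> bas" where
  "bcirc g m = (case g of GS_A \<Rightarrow> (if even m then (1, 2) else (0, 0)) | GS_B \<Rightarrow> (0, 1))"

definition energy :: "bas \<Rightarrow> bas \<Rightarrow> int" where
  "energy b b' = (case b of (a, i) \<Rightarrow> case b' of (a', j) \<Rightarrow> int (min i (2 - j)) - a + a')"

text \<open>u (x) v_circ_{m+r} (x) ... (x) v_circ_{m+r+k-1}: the transition map of the inductive
  system defining the pre-Fock space bar F_m, from stage r to stage r+k, on representatives.\<close>
definition tappend :: "tens \<Rightarrow> bas \<Rightarrow> tens" where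
  "tappend u c = (\<lambda>zs. if zs \<noteq> [] \<and> last zs = c then u (butlast zs) else 0)"

fun push :: "gseq \<Rightarrow> int \<Rightarrow> nat \<Rightarrow> nat \<Rightarrow> tens \<Rightarrow> tens" where
  "push g m r 0 u = u"
| "push g m r (Suc k) u = tappend (push g m r k u) (bcirc g (m + int r + int k))"

text \<open>For u in V_aff^{(x)r}, the element (image of u) of the pre-Fock space bar F_m lies in
  q^n L(bar F_m), where L(bar F_m) is the A-span of the images of the L(wedge^{r_i} V_aff):
  i.e. there are finitely many u_i in the A-lattice of V_aff^{(x) r_i} and c_i in A such that the image of u
  equals q^n sum c_i (image of u_i); equality in the inductive limit of the quotients
  wedge^t = V^{(x)t}/N_t being tested at a common later stage t.\<close>
definition in_qL_Fbar :: "gseq \<Rightarrow> int \<Rightarrow> nat \<Rightarrow> nat \<Rightarrow> tens \<Rightarrow> bool" where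
  "in_qL_Fbar g m n r u \<longleftrightarrow>
     (\<exists>t cs. r \<le> t \<and> (\<forall>(ri, ui, ci)\<in>set cs. ri \<le> t \<and> ui \<in> Ltens ri \<and> ci \<in> Areg) \<and>
        tsub (push g m r (t - r) u)
             (tscale (qq ^ n) (foldr tadd (map (\<lambda>(ri, ui, ci). tscale ci (push g m ri (t - ri) ui)) cs) tzero))
          \<in> Nn t)"

end

theory Submission
  imports Defs
begin

(* Write u \<and> |s> for the image of u \<otimes> v\<degree>_s \<otimes> v\<degree>_(s+1) \<otimes> ... in the pre-Fock space; call it null
  if it lies in q^n L for every n.  For y = z^a b_j with H(y \<otimes> b\<degree>_s) \<le> 0 and y \<noteq> b\<degree>_s, elements of N
  give an exchange rule
    G(y) \<otimes> v\<degree>_s = c_s v\<degree>_s \<otimes> G(y) + (A-combination of vectors x \<otimes> G(y'))   modulo N,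
  where every y' satisfies H(y' \<otimes> b\<degree>_(s+1)) \<le> 0 and has smaller rank 3a + 2 - j, and c_s c_(s+1) = q^4.
  By induction on the rank the correction terms are null, so exchanging twice per step gives
    G(y) \<and> |s> = q^(4k) v\<degree>_s \<and> ... \<and> v\<degree>_(s+2k-1) \<and> G(y) \<and> |s+2k>   modulo null vectors
  for every k; hence G(y) \<and> |s> is null.  For y = b\<degree>_s already G(y) \<otimes> G(y) lies in N.  The exchange
  rules for the least admissible power of z come from the f_1-string and the e_0-images of v_0 \<otimes> v_0;
  z \<otimes> 1 + 1 \<otimes> z carries them to all higher powers. *)

lemma Fract_1_eq_0_iff: "Fract (p :: rat poly) 1 = 0 \<longleftrightarrow> p = 0"
  by (simp add: Zero_fract_def eq_fract)

lemma Fract_1_ne_0: "coeff (p :: rat poly) 0 \<noteq> 0 \<Longrightarrow> Fract p 1 \<noteq> 0"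
  by (auto simp: Fract_1_eq_0_iff)

lemma qq_nonzero [simp]: "qq \<noteq> 0"
  unfolding qq_def by (simp add: Fract_1_eq_0_iff)

lemma qq_power: "qq ^ k = Fract (monom 1 k) 1"
proof (induction k)
  case 0
  then show ?case by (simp add: One_fract_def monom_0 one_pCons)
next
  case (Suc k)
  then have "qq ^ Suc k = Fract [:0, 1:] 1 * Fract (monom 1 k) 1" by (simp add: qq_def)
  then show ?case by (simp add: monom_Suc)
qed

lemma qq_power_add_1_ne_0: "qq ^ k + 1 \<noteq> 0"
proof (cases k)
  case 0
  then show ?thesis by simp
next
  case (Suc j)
  have "qq ^ k + 1 = Fract (monom 1 k + 1) 1" by (simp add: qq_power One_fract_def)
  moreover have "coeff (monom (1 :: rat) k + 1) 0 \<noteq> 0" using Suc by (simp add: coeff_monom)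
  ultimately show ?thesis using Fract_1_ne_0 by metis
qed

lemma qq_square_ne_1: "qq ^ 2 \<noteq> 1"
proof -
  have "qq ^ 2 - 1 = Fract (monom 1 2 - 1) 1" by (simp add: qq_power One_fract_def)
  moreover have "coeff (monom (1 :: rat) 2 - 1) 0 \<noteq> 0" by (simp add: coeff_monom)
  ultimately show ?thesis using Fract_1_ne_0 by fastforce
qed

lemma qq_quartic_ne_0: "qq ^ 4 + qq ^ 2 + 1 \<noteq> 0"
proof -
  have "qq ^ 4 + qq ^ 2 + 1 = Fract (monom 1 4 + monom 1 2 + 1) 1" by (simp add: qq_power One_fract_def)
  moreover have "coeff (monom (1 :: rat) 4 + monom 1 2 + 1) 0 \<noteq> 0" by (simp add: coeff_monom)
  ultimately show ?thesis using Fract_1_ne_0 by metis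
qed

lemma qq_minus_inverse_ne_0: "qq - inverse qq \<noteq> 0"
proof
  assume "qq - inverse qq = 0"
  then have "qq * qq = 1" by (simp add: field_simps)
  then show False using qq_square_ne_1 by (simp add: power2_eq_square)
qed

lemma qint_1: "qint 1 = 1"
  using qq_minus_inverse_ne_0 by (simp add: qint_def power_int_minus)

lemma qint_2: "qint 2 = qq + inverse qq"
  using qq_minus_inverse_ne_0 qq_square_ne_1
  by (simp add: qint_def power_int_minus field_simps power2_eq_square)

lemma qint_3: "qint 3 = qq ^ 2 + 1 + inverse (qq ^ 2)"
proof -
  have "(qq ^ 2 + 1 + inverse (qq ^ 2)) * (qq - inverse qq) = qq ^ 3 - inverse (qq ^ 3)"
    by (simp add: field_simps) algebra
  then show ?thesis using qq_minus_inverse_ne_0 by (simp add: qint_def power_int_minus field_simps)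
qed

lemma qint_2_ne_0: "qint 2 \<noteq> 0"
proof
  assume "qint 2 = 0"
  moreover have "qint 2 * qq = qq ^ 2 + 1" by (simp add: qint_2 field_simps; algebra)
  ultimately show False using qq_power_add_1_ne_0[of 2] by simp
qed

lemma qint_3_ne_0: "qint 3 \<noteq> 0"
proof
  assume "qint 3 = 0"
  moreover have "qint 3 * qq ^ 2 = qq ^ 4 + qq ^ 2 + 1" by (simp add: qint_3 field_simps; algebra)
  ultimately show False using qq_quartic_ne_0 by simp
qed

lemma Areg_Fract_1: "Fract p 1 \<in> Areg"
  unfolding Areg_def by (intro CollectI exI[of _ p] exI[of _ 1]) simp

lemma Areg_1 [simp]: "1 \<in> Areg"
  using Areg_Fract_1[of 1] by (simp add: One_fract_def)

lemma Areg_qq [simp]: "qq \<in> Areg"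
  unfolding qq_def by (rule Areg_Fract_1)

lemma Areg_mult [simp]:
  assumes "x \<in> Areg" "y \<in> Areg"
  shows "x * y \<in> Areg"
proof -
  obtain p r p' r' where "x = Fract p r" "poly r 0 \<noteq> 0" "y = Fract p' r'" "poly r' 0 \<noteq> 0"
    using assms unfolding Areg_def by auto
  then show ?thesis unfolding Areg_def by (intro CollectI exI[of _ "p * p'"] exI[of _ "r * r'"]) simp
qed

lemma Areg_add [simp]:
  assumes "x \<in> Areg" "y \<in> Areg"
  shows "x + y \<in> Areg"
proof -
  obtain p r p' r' where "x = Fract p r" "poly r 0 \<noteq> 0" "y = Fract p' r'" "poly r' 0 \<noteq> 0"
    using assms unfolding Areg_def by auto
  moreover from this have "r \<noteq> 0" "r' \<noteq> 0" by auto
  ultimately show ?thesis unfolding Areg_def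
    by (intro CollectI exI[of _ "p * r' + p' * r"] exI[of _ "r * r'"]) simp
qed

lemma Areg_uminus [simp]:
  assumes "x \<in> Areg"
  shows "- x \<in> Areg"
proof -
  obtain p r where "x = Fract p r" "poly r 0 \<noteq> 0" using assms unfolding Areg_def by auto
  then show ?thesis unfolding Areg_def by (intro CollectI exI[of _ "- p"] exI[of _ r]) simp
qed

lemma Areg_diff [simp]: "x \<in> Areg \<Longrightarrow> y \<in> Areg \<Longrightarrow> x - y \<in> Areg"
  using Areg_add[of x "- y"] by simp

lemma Areg_power [simp]: "x \<in> Areg \<Longrightarrow> x ^ n \<in> Areg"
proof (induction n)
  case 0
  show ?case by (simp only: power_0 Areg_1)
next
  case (Suc n)
  then show ?case by (simp only: power_Suc Areg_mult)
qed

lemmas tens_simps = tadd_def tsub_def tscale_def tzero_def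

definition fin_supp :: "tens \<Rightarrow> bool" where
  "fin_supp x \<longleftrightarrow> finite {zs. x zs \<noteq> 0}"

lemma fin_supp_bt [simp]: "fin_supp (bt xs)"
proof -
  have "{zs. bt xs zs \<noteq> 0} = {xs}" by (auto simp: bt_def)
  then show ?thesis by (simp add: fin_supp_def)
qed

lemma fin_supp_tzero [simp]: "fin_supp tzero"
  by (simp add: fin_supp_def tzero_def)

lemma fin_supp_tadd [simp]: "fin_supp x \<Longrightarrow> fin_supp y \<Longrightarrow> fin_supp (tadd x y)"
  unfolding fin_supp_def tadd_def
  by (rule finite_subset[of _ "{zs. x zs \<noteq> 0} \<union> {zs. y zs \<noteq> 0}"]) auto

lemma fin_supp_tscale [simp]: "fin_supp x \<Longrightarrow> fin_supp (tscale c x)"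
  unfolding fin_supp_def tscale_def by (rule finite_subset[of _ "{zs. x zs \<noteq> 0}"]) auto

lemma fin_supp_tsub [simp]: "fin_supp x \<Longrightarrow> fin_supp y \<Longrightarrow> fin_supp (tsub x y)"
  unfolding fin_supp_def tsub_def
  by (rule finite_subset[of _ "{zs. x zs \<noteq> 0} \<union> {zs. y zs \<noteq> 0}"]) auto

lemma tsub_eq_tadd_tscale: "tsub x y = tadd x (tscale (-1) y)"
  by (rule ext) (simp add: tens_simps)

lemma lin_ext_eq_sum:
  assumes "finite U" "{zs. x zs \<noteq> 0} \<subseteq> U"
  shows "lin_ext g x ys = (\<Sum>zs\<in>U. x zs * g zs ys)"
  unfolding lin_ext_def by (rule sum.mono_neutral_left) (use assms in auto)

lemma lin_ext_bt [simp]: "lin_ext g (bt xs) = g xs"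
proof
  fix ys
  have "lin_ext g (bt xs) ys = (\<Sum>zs\<in>{xs}. bt xs zs * g zs ys)"
    by (rule lin_ext_eq_sum) (auto simp: bt_def)
  then show "lin_ext g (bt xs) ys = g xs ys" by (simp add: bt_def)
qed

lemma lin_ext_tzero [simp]: "lin_ext g tzero = tzero"
  by (simp add: lin_ext_def tzero_def)

lemma lin_ext_tadd:
  assumes "fin_supp x" "fin_supp y"
  shows "lin_ext g (tadd x y) = tadd (lin_ext g x) (lin_ext g y)"
proof
  fix ys
  let ?U = "{zs. x zs \<noteq> 0} \<union> {zs. y zs \<noteq> 0}"
  have U: "finite ?U" using assms by (simp add: fin_supp_def)
  have "lin_ext g (tadd x y) ys = (\<Sum>zs\<in>?U. tadd x y zs * g zs ys)"
    by (rule lin_ext_eq_sum[OF U]) (auto simp: tadd_def)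
  also have "\<dots> = (\<Sum>zs\<in>?U. x zs * g zs ys) + (\<Sum>zs\<in>?U. y zs * g zs ys)"
    by (simp add: tadd_def distrib_right sum.distrib)
  also have "\<dots> = lin_ext g x ys + lin_ext g y ys"
    by (simp add: lin_ext_eq_sum[OF U])
  finally show "lin_ext g (tadd x y) ys = tadd (lin_ext g x) (lin_ext g y) ys"
    by (simp add: tadd_def)
qed

lemma lin_ext_tscale:
  assumes "fin_supp x"
  shows "lin_ext g (tscale c x) = tscale c (lin_ext g x)"
proof
  fix ys
  let ?U = "{zs. x zs \<noteq> 0}"
  have U: "finite ?U" using assms by (simp add: fin_supp_def)
  have "lin_ext g (tscale c x) ys = (\<Sum>zs\<in>?U. tscale c x zs * g zs ys)"
    by (rule lin_ext_eq_sum[OF U]) (auto simp: tscale_def)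
  also have "\<dots> = c * lin_ext g x ys"
    by (simp add: tscale_def sum_distrib_left mult.assoc lin_ext_eq_sum[OF U])
  finally show "lin_ext g (tscale c x) ys = tscale c (lin_ext g x) ys"
    by (simp add: tscale_def)
qed

lemma lin_ext_tsub:
  "fin_supp x \<Longrightarrow> fin_supp y \<Longrightarrow> lin_ext g (tsub x y) = tsub (lin_ext g x) (lin_ext g y)"
  by (simp add: tsub_eq_tadd_tscale lin_ext_tadd lin_ext_tscale)

definition tlinear :: "(tens \<Rightarrow> tens) \<Rightarrow> bool" where
  "tlinear f \<longleftrightarrow> (\<forall>x y. f (tadd x y) = tadd (f x) (f y)) \<and> (\<forall>c x. f (tscale c x) = tscale c (f x))"

lemma tlinearI:
  "(\<And>x y. f (tadd x y) = tadd (f x) (f y)) \<Longrightarrow> (\<And>c x. f (tscale c x) = tscale c (f x)) \<Longrightarrow> tlinear f"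
  by (simp add: tlinear_def)

lemma tlinear_tadd: "tlinear f \<Longrightarrow> f (tadd x y) = tadd (f x) (f y)"
  by (simp add: tlinear_def)

lemma tlinear_tscale: "tlinear f \<Longrightarrow> f (tscale c x) = tscale c (f x)"
  by (simp add: tlinear_def)

lemma tlinear_tsub: "tlinear f \<Longrightarrow> f (tsub x y) = tsub (f x) (f y)"
  by (simp add: tsub_eq_tadd_tscale tlinear_tadd tlinear_tscale)

lemma tlinear_tzero:
  assumes "tlinear f"
  shows "f tzero = tzero"
proof -
  have "f tzero = f (tscale 0 tzero)" by (simp add: tens_simps)
  also have "\<dots> = tzero" by (simp add: tlinear_tscale[OF assms]) (simp add: tens_simps)
  finally show ?thesis .
qed

lemma span_over_tsub:
  "-1 \<in> R \<Longrightarrow> x \<in> span_over R S \<Longrightarrow> y \<in> span_over R S \<Longrightarrow> tsub x y \<in> span_over R S"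
  by (simp add: tsub_eq_tadd_tscale span_over.span_add span_over.span_scale)

lemma span_over_image:
  assumes "tlinear f" "\<And>x. x \<in> S \<Longrightarrow> f x \<in> span_over R T" "x \<in> span_over R S"
  shows "f x \<in> span_over R T"
  using assms(3)
  by induction
    (simp_all add: assms(2) tlinear_tzero[OF assms(1)] tlinear_tadd[OF assms(1)]
      tlinear_tscale[OF assms(1)] span_over.intros)

lemma fin_supp_span_over:
  assumes "\<And>x. x \<in> S \<Longrightarrow> fin_supp x" "x \<in> span_over R S"
  shows "fin_supp x"
  using assms(2) by induction (simp_all add: assms(1))

lemma lin_ext_span_over:
  assumes fin: "\<And>x. x \<in> S \<Longrightarrow> fin_supp x" and img: "\<And>x. x \<in> S \<Longrightarrow> lin_ext g x \<in> span_over R T"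
    and "x \<in> span_over R S"
  shows "lin_ext g x \<in> span_over R T"
  using assms(3)
proof induction
  case (span_add x y)
  then show ?case
    using fin_supp_span_over[OF fin] by (simp add: lin_ext_tadd span_over.span_add)
next
  case (span_scale c x)
  then show ?case
    using fin_supp_span_over[OF fin] by (simp add: lin_ext_tscale span_over.span_scale)
qed (simp_all add: img span_over.span_zero)

definition tprepend :: "bas \<Rightarrow> tens \<Rightarrow> tens" where
  "tprepend c x = (\<lambda>zs. if zs \<noteq> [] \<and> hd zs = c then x (tl zs) else 0)"

lemma tlinear_tappend: "tlinear (\<lambda>u. tappend u c)"
  by (intro tlinearI ext) (simp_all add: tappend_def tens_simps)

lemma tlinear_tprepend: "tlinear (tprepend c)"
  by (intro tlinearI ext) (simp_all add: tprepend_def tens_simps)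

lemma tappend_bt: "tappend (bt xs) c = bt (xs @ [c])"
proof
  fix zs
  show "tappend (bt xs) c zs = bt (xs @ [c]) zs"
    by (cases zs rule: rev_cases) (auto simp: tappend_def bt_def)
qed

lemma tprepend_bt: "tprepend c (bt xs) = bt (c # xs)"
proof
  fix zs
  show "tprepend c (bt xs) zs = bt (c # xs) zs" by (cases zs) (auto simp: tprepend_def bt_def)
qed

lemma tappend_embed: "tappend (embed xs u ys) c = embed xs u (ys @ [c])"
proof
  fix zs
  show "tappend (embed xs u ys) c zs = embed xs u (ys @ [c]) zs"
    by (cases zs rule: rev_cases) (auto simp: tappend_def embed_def)
qed

lemma tprepend_embed: "tprepend c (embed xs u ys) = embed (c # xs) u ys"
proof
  fix zs
  show "tprepend c (embed xs u ys) zs = embed (c # xs) u ys zs"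
    by (cases zs) (auto simp: tprepend_def embed_def)
qed

lemma tappend_tprepend: "tappend (tprepend c x) d = tprepend c (tappend x d)"
proof
  fix zs
  show "tappend (tprepend c x) d zs = tprepend c (tappend x d) zs"
    by (cases zs) (auto simp: tappend_def tprepend_def)
qed

lemma Nsp_length_ne_2:
  assumes "x \<in> Nsp" "length ys \<noteq> 2"
  shows "x ys = 0"
proof -
  have "E2 i zs ys = 0" "F2 i zs ys = 0" "Q2 h zs ys = 0" "zz2 s zs ys = 0" "zsum2 zs ys = 0"
    for i zs h s
    using assms(2) by (auto simp: E2_def F2_def Q2_def zz2_def zsum2_def tp2_def tens_simps bt_def)
  with assms show ?thesis by induction (auto simp: tens_simps bt_def lin_ext_def)
qed

lemma Nsp_subset_Nn_2: "u \<in> Nsp \<Longrightarrow> u \<in> Nn 2"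
proof -
  assume u: "u \<in> Nsp"
  have "embed [] u [] = u" by (rule ext) (auto simp: embed_def Nsp_length_ne_2[OF u])
  moreover have "embed [] u [] \<in> Nn 2"
    unfolding Nn_def by (rule span_base) (use u in \<open>auto simp: valid_def\<close>)
  ultimately show ?thesis by simp
qed

lemma Nn_tadd: "x \<in> Nn t \<Longrightarrow> y \<in> Nn t \<Longrightarrow> tadd x y \<in> Nn t"
  unfolding Nn_def by (rule span_add)

lemma Nn_tscale: "x \<in> Nn t \<Longrightarrow> tscale c x \<in> Nn t"
  unfolding Nn_def by (rule span_scale) auto

lemma Nn_tappend: "x \<in> Nn t \<Longrightarrow> snd c \<le> 2 \<Longrightarrow> tappend x c \<in> Nn (Suc t)"
  unfolding Nn_def
  by (erule span_over_image[OF tlinear_tappend, rotated], rule span_base)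
    (fastforce simp: tappend_embed valid_def)

lemma Nn_tprepend: "x \<in> Nn t \<Longrightarrow> snd c \<le> 2 \<Longrightarrow> tprepend c x \<in> Nn (Suc t)"
  unfolding Nn_def
  by (erule span_over_image[OF tlinear_tprepend, rotated], rule span_base)
    (fastforce simp: tprepend_embed valid_def)

lemma Ltens_tadd: "x \<in> Ltens t \<Longrightarrow> y \<in> Ltens t \<Longrightarrow> tadd x y \<in> Ltens t"
  unfolding Ltens_def by (rule span_add)

lemma Ltens_tscale: "c \<in> Areg \<Longrightarrow> x \<in> Ltens t \<Longrightarrow> tscale c x \<in> Ltens t"
  unfolding Ltens_def by (rule span_scale)

lemma Ltens_bt: "length cs = t \<Longrightarrow> valid cs \<Longrightarrow> bt cs \<in> Ltens t"
  unfolding Ltens_def by (rule span_base) auto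

lemma Ltens_tappend: "x \<in> Ltens t \<Longrightarrow> snd c \<le> 2 \<Longrightarrow> tappend x c \<in> Ltens (Suc t)"
  unfolding Ltens_def
  by (erule span_over_image[OF tlinear_tappend, rotated], rule span_base)
    (fastforce simp: tappend_bt valid_def)

lemma Ltens_tprepend: "x \<in> Ltens t \<Longrightarrow> snd c \<le> 2 \<Longrightarrow> tprepend c x \<in> Ltens (Suc t)"
  unfolding Ltens_def
  by (erule span_over_image[OF tlinear_tprepend, rotated], rule span_base)
    (fastforce simp: tprepend_bt valid_def)

section \<open>Null vectors of the Fock space\<close>

fun append_vac :: "gseq \<Rightarrow> int \<Rightarrow> nat \<Rightarrow> tens \<Rightarrow> tens" where
  "append_vac g s 0 u = u"
| "append_vac g s (Suc k) u = tappend (append_vac g s k u) (bcirc g (s + int k))"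

definition vac_list :: "gseq \<Rightarrow> int \<Rightarrow> nat \<Rightarrow> bas list" where
  "vac_list g s k = map (\<lambda>i. bcirc g (s + int i)) [0..<k]"

lemma bcirc_valid [simp]: "snd (bcirc g s) \<le> 2"
  by (cases g) (auto simp: bcirc_def)

lemma length_vac_list [simp]: "length (vac_list g s k) = k"
  by (simp add: vac_list_def)

lemma valid_vac_list: "valid (vac_list g s k)"
  by (auto simp: vac_list_def valid_def)

lemma push_eq_append_vac: "push g m r k u = append_vac g (m + int r) k u"
  by (induction k) (auto simp: add.assoc)

lemma append_vac_add: "append_vac g s (k + j) u = append_vac g (s + int k) j (append_vac g s k u)"
  by (induction j) (auto simp: add.assoc)

lemma append_vac_Suc_left: "append_vac g s (Suc k) u = append_vac g (s + 1) k (tappend u (bcirc g s))"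
  using append_vac_add[of g s 1 k u] by simp

lemma append_vac_bt: "append_vac g s k (bt ys) = bt (ys @ vac_list g s k)"
  by (induction k) (simp_all add: vac_list_def tappend_bt)

lemma tlinear_append_vac: "tlinear (append_vac g s k)"
  by (induction k)
    (simp_all add: tlinear_def tlinear_tadd[OF tlinear_tappend] tlinear_tscale[OF tlinear_tappend])

lemma append_vac_tprepend: "append_vac g s k (tprepend c x) = tprepend c (append_vac g s k x)"
  by (induction k) (simp_all add: tappend_tprepend)

lemma Nn_append_vac: "x \<in> Nn t \<Longrightarrow> append_vac g s k x \<in> Nn (t + k)"
  by (induction k) (simp_all add: Nn_tappend)

lemma Ltens_append_vac: "x \<in> Ltens t \<Longrightarrow> append_vac g s k x \<in> Ltens (t + k)"
  by (induction k) (simp_all add: Ltens_tappend)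

text \<open>For u in the r-th tensor power: u \<and> |s> = q^n w in the pre-Fock space, with w in the lattice,
  witnessed modulo N after appending k vacuum vectors.\<close>

definition fock_approx :: "gseq \<Rightarrow> int \<Rightarrow> nat \<Rightarrow> tens \<Rightarrow> nat \<Rightarrow> nat \<Rightarrow> tens \<Rightarrow> bool" where
  "fock_approx g s r u n k w \<longleftrightarrow>
     w \<in> Ltens (r + k) \<and> tsub (append_vac g s k u) (tscale (qq ^ n) w) \<in> Nn (r + k)"

definition fock_null :: "gseq \<Rightarrow> int \<Rightarrow> nat \<Rightarrow> tens \<Rightarrow> bool" where
  "fock_null g s r u \<longleftrightarrow> (\<forall>n. \<exists>k w. fock_approx g s r u n k w)"

lemma in_qL_Fbar_if_fock_null:
  assumes "fock_null g (m + int r) r u"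
  shows "in_qL_Fbar g m n r u"
proof -
  obtain k w where w: "w \<in> Ltens (r + k)"
    and N: "tsub (append_vac g (m + int r) k u) (tscale (qq ^ n) w) \<in> Nn (r + k)"
    using assms unfolding fock_null_def fock_approx_def by blast
  have "foldr tadd (map (\<lambda>(ri, ui, ci). tscale ci (push g m ri (r + k - ri) ui)) [(r + k, w, 1)]) tzero
      = w"
    by (rule ext) (simp add: tens_simps)
  with w N show ?thesis
    unfolding in_qL_Fbar_def
    by (intro exI[of _ "r + k"] exI[of _ "[(r + k, w, 1)]"]) (simp add: push_eq_append_vac)
qed

lemma fock_approx_later:
  assumes "fock_approx g s r u n k w"
  shows "fock_approx g s r u n (k + j) (append_vac g (s + int k) j w)"
proof -
  have "append_vac g (s + int k) j (tsub (append_vac g s k u) (tscale (qq ^ n) w)) =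
      tsub (append_vac g s (k + j) u) (tscale (qq ^ n) (append_vac g (s + int k) j w))"
    by (simp add: append_vac_add tlinear_tsub[OF tlinear_append_vac] tlinear_tscale[OF tlinear_append_vac])
  then show ?thesis
    using assms Ltens_append_vac Nn_append_vac unfolding fock_approx_def by (metis add.assoc)
qed

lemma fock_approx_tadd:
  assumes "fock_approx g s r u n k w" "fock_approx g s r v n k w'"
  shows "fock_approx g s r (tadd u v) n k (tadd w w')"
proof -
  have "tsub (append_vac g s k (tadd u v)) (tscale (qq ^ n) (tadd w w')) =
      tadd (tsub (append_vac g s k u) (tscale (qq ^ n) w)) (tsub (append_vac g s k v) (tscale (qq ^ n) w'))"
    unfolding tlinear_tadd[OF tlinear_append_vac] by (rule ext) (simp add: tens_simps algebra_simps)
  with assms show ?thesis unfolding fock_approx_def by (simp add: Ltens_tadd Nn_tadd)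
qed

lemma fock_approx_tscale:
  assumes "fock_approx g s r u n k w" "c \<in> Areg"
  shows "fock_approx g s r (tscale c u) n k (tscale c w)"
proof -
  have "tsub (append_vac g s k (tscale c u)) (tscale (qq ^ n) (tscale c w)) =
      tscale c (tsub (append_vac g s k u) (tscale (qq ^ n) w))"
    unfolding tlinear_tscale[OF tlinear_append_vac] by (rule ext) (simp add: tens_simps algebra_simps)
  with assms show ?thesis unfolding fock_approx_def by (simp add: Ltens_tscale Nn_tscale)
qed

lemma fock_approx_tprepend:
  assumes "fock_approx g s r u n k w" "snd c \<le> 2"
  shows "fock_approx g s (Suc r) (tprepend c u) n k (tprepend c w)"
proof -
  have "tsub (append_vac g s k (tprepend c u)) (tscale (qq ^ n) (tprepend c w)) =
      tprepend c (tsub (append_vac g s k u) (tscale (qq ^ n) w))"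
    by (simp add: append_vac_tprepend tlinear_tsub[OF tlinear_tprepend] tlinear_tscale[OF tlinear_tprepend])
  with assms show ?thesis unfolding fock_approx_def by (simp add: Nn_tprepend Ltens_tprepend)
qed

lemma fock_approx_tappend_bcirc:
  "fock_approx g (s + 1) (Suc r) (tappend u (bcirc g s)) n k w \<longleftrightarrow> fock_approx g s r u n (Suc k) w"
  by (simp del: append_vac.simps add: fock_approx_def append_vac_Suc_left)

lemma fock_null_tadd:
  assumes "fock_null g s r u" "fock_null g s r v"
  shows "fock_null g s r (tadd u v)"
  unfolding fock_null_def
proof
  fix n
  obtain k1 w1 k2 w2 where "fock_approx g s r u n k1 w1" "fock_approx g s r v n k2 w2"
    using assms unfolding fock_null_def by blast
  then have "\<exists>w. fock_approx g s r u n (max k1 k2) w" "\<exists>w. fock_approx g s r v n (max k1 k2) w"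
    using fock_approx_later[of g s r u n k1 w1 "max k1 k2 - k1"]
      fock_approx_later[of g s r v n k2 w2 "max k1 k2 - k2"] by auto
  then show "\<exists>k w. fock_approx g s r (tadd u v) n k w" by (blast intro: fock_approx_tadd)
qed

lemma fock_null_tscale: "fock_null g s r u \<Longrightarrow> c \<in> Areg \<Longrightarrow> fock_null g s r (tscale c u)"
  unfolding fock_null_def by (blast intro: fock_approx_tscale)

lemma fock_null_tprepend: "fock_null g s r u \<Longrightarrow> snd c \<le> 2 \<Longrightarrow> fock_null g s (Suc r) (tprepend c u)"
  unfolding fock_null_def by (blast intro: fock_approx_tprepend)

lemma fock_null_Nn:
  assumes "u \<in> Nn r"
  shows "fock_null g s r u"
proof -
  have "tsub u (tscale (qq ^ n) tzero) = u" for n by (rule ext) (simp add: tens_simps)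
  with assms have "fock_approx g s r u n 0 tzero" for n
    by (simp add: fock_approx_def Ltens_def span_over.span_zero)
  then show ?thesis unfolding fock_null_def by blast
qed

lemma fock_null_tzero: "fock_null g s r tzero"
  by (rule fock_null_Nn) (simp add: Nn_def span_over.span_zero)

lemma fock_null_congruent: "tsub u v \<in> Nn r \<Longrightarrow> fock_null g s r v \<Longrightarrow> fock_null g s r u"
proof -
  assume "tsub u v \<in> Nn r" "fock_null g s r v"
  then have "fock_null g s r (tadd (tsub u v) v)" by (simp add: fock_null_tadd fock_null_Nn)
  moreover have "tadd (tsub u v) v = u" by (rule ext) (simp add: tens_simps)
  ultimately show ?thesis by simp
qed

lemma fock_null_tappend_bcirc:
  "fock_null g (s + 1) (Suc r) (tappend u (bcirc g s)) \<longleftrightarrow> fock_null g s r u"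
  unfolding fock_null_def fock_approx_tappend_bcirc
  by (metis Suc_eq_plus1 fock_approx_later)

lemma fock_null_if_congruent_to_powers:
  assumes "\<And>n. \<exists>k w. w \<in> Ltens (r + k) \<and>
    fock_null g (s + int k) (r + k) (tsub (append_vac g s k u) (tscale (qq ^ n) w))"
  shows "fock_null g s r u"
  unfolding fock_null_def
proof
  fix n
  obtain k w where w: "w \<in> Ltens (r + k)"
    and null: "fock_null g (s + int k) (r + k) (tsub (append_vac g s k u) (tscale (qq ^ n) w))"
    using assms by blast
  let ?d = "tsub (append_vac g s k u) (tscale (qq ^ n) w)"
  obtain j w' where "fock_approx g (s + int k) (r + k) ?d n j w'"
    using null unfolding fock_null_def by blast
  moreover have "tsub (append_vac g s (k + j) u) (tscale (qq ^ n) (tadd (append_vac g (s + int k) j w) w')) =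
      tsub (append_vac g (s + int k) j ?d) (tscale (qq ^ n) w')"
    unfolding append_vac_add tlinear_tsub[OF tlinear_append_vac] tlinear_tscale[OF tlinear_append_vac]
    by (rule ext) (simp add: tens_simps algebra_simps)
  ultimately have "fock_approx g s r u n (k + j) (tadd (append_vac g (s + int k) j w) w')"
    using Ltens_append_vac[OF w] by (simp add: fock_approx_def Ltens_tadd add.assoc)
  then show "\<exists>k w. fock_approx g s r u n k w" by blast
qed

section \<open>Telescoping\<close>

definition exch :: "gseq \<Rightarrow> int \<Rightarrow> bas \<Rightarrow> K \<Rightarrow> tens" where
  "exch g s y c = tsub (bt [y, bcirc g s]) (tscale c (bt [bcirc g s, y]))"

definition tprepend_list :: "bas list \<Rightarrow> tens \<Rightarrow> tens" where
  "tprepend_list xs u = foldr tprepend xs u"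

lemma tprepend_list_bt: "tprepend_list xs (bt ys) = bt (xs @ ys)"
  by (induction xs) (simp_all add: tprepend_list_def tprepend_bt)

lemma tlinear_tprepend_list: "tlinear (tprepend_list xs)"
  by (induction xs)
    (simp_all add: tprepend_list_def tlinear_def tlinear_tadd[OF tlinear_tprepend]
      tlinear_tscale[OF tlinear_tprepend])

lemma fock_null_tprepend_list:
  "fock_null g s r u \<Longrightarrow> valid xs \<Longrightarrow> fock_null g s (length xs + r) (tprepend_list xs u)"
  by (induction xs) (simp_all add: tprepend_list_def valid_def fock_null_tprepend)

lemma vac_list_Suc: "vac_list g s (Suc k) = vac_list g s k @ [bcirc g (s + int k)]"
  by (simp add: vac_list_def)

definition exch2 :: "gseq \<Rightarrow> int \<Rightarrow> bas \<Rightarrow> tens" where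
  "exch2 g s y =
     tsub (bt [y, bcirc g s, bcirc g (s + 1)]) (tscale (qq ^ 4) (bt [bcirc g s, bcirc g (s + 1), y]))"

lemma fock_null_exch2:
  assumes exch: "\<And>s'. fock_null g (s' + 1) 2 (exch g s' y (c s'))"
    and c: "\<And>s'. c s' \<in> Areg" and prod: "\<And>s'. c s' * c (s' + 1) = qq ^ 4"
  shows "fock_null g (s + 2) 3 (exch2 g s y)"
proof -
  let ?v = "bcirc g s" and ?w = "bcirc g (s + 1)"
  have "fock_null g (s + 2) 3 (tappend (exch g s y (c s)) ?w)"
    using fock_null_tappend_bcirc[of g "s + 1" 2] exch[of s] by (simp add: add.assoc numeral_3_eq_3)
  moreover have "fock_null g (s + 2) 3 (tscale (c s) (tprepend ?v (exch g (s + 1) y (c (s + 1)))))"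
    using fock_null_tscale[OF fock_null_tprepend[OF exch[of "s + 1"]] c]
    by (simp add: add.assoc numeral_3_eq_3)
  moreover have "tadd (tappend (exch g s y (c s)) ?w)
      (tscale (c s) (tprepend ?v (exch g (s + 1) y (c (s + 1))))) = exch2 g s y"
    unfolding exch_def exch2_def tlinear_tsub[OF tlinear_tappend] tlinear_tscale[OF tlinear_tappend]
      tlinear_tsub[OF tlinear_tprepend] tlinear_tscale[OF tlinear_tprepend] tappend_bt tprepend_bt
    by (rule ext) (simp add: tens_simps right_diff_distrib mult.assoc[symmetric] prod)
  ultimately show ?thesis by (metis fock_null_tadd)
qed

lemma fock_null_of_exch:
  assumes exch: "\<And>s'. fock_null g (s' + 1) 2 (exch g s' y (c s'))"
    and c: "\<And>s'. c s' \<in> Areg" and prod: "\<And>s'. c s' * c (s' + 1) = qq ^ 4"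
    and y: "snd y \<le> 2"
  shows "fock_null g s 1 (bt [y])"
proof (rule fock_null_if_congruent_to_powers)
  define X where
    "X j = tsub (bt (y # vac_list g s (2 * j))) (tscale (qq ^ (4 * j)) (bt (vac_list g s (2 * j) @ [y])))"
    for j
  have X: "fock_null g (s + int (2 * j)) (1 + 2 * j) (X j)" for j
  proof (induction j)
    case 0
    have "X 0 = tzero" unfolding X_def by (rule ext) (simp add: tens_simps vac_list_def)
    then show ?case by (simp add: fock_null_tzero)
  next
    case (Suc j)
    let ?a = "s + int (2 * j)" and ?P = "vac_list g s (2 * j)"
    have "fock_null g (?a + 1 + 1) (Suc (Suc (1 + 2 * j)))
        (tappend (tappend (X j) (bcirc g ?a)) (bcirc g (?a + 1)))"
      using Suc.IH by (simp only: fock_null_tappend_bcirc)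
    moreover have "fock_null g (?a + 2) (length ?P + 3) (tscale (qq ^ (4 * j)) (tprepend_list ?P (exch2 g ?a y)))"
      using fock_null_exch2[OF exch c prod] valid_vac_list
      by (intro fock_null_tscale fock_null_tprepend_list) simp_all
    moreover have "tadd (tappend (tappend (X j) (bcirc g ?a)) (bcirc g (?a + 1)))
        (tscale (qq ^ (4 * j)) (tprepend_list ?P (exch2 g ?a y))) = X (Suc j)"
    proof -
      have "2 * Suc j = Suc (Suc (2 * j))" by simp
      then have "vac_list g s (2 * Suc j) = ?P @ [bcirc g ?a, bcirc g (?a + 1)]"
        by (simp only: vac_list_Suc) (simp add: ac_simps)
      then show ?thesis
        unfolding X_def exch2_def tlinear_tsub[OF tlinear_tappend] tlinear_tscale[OF tlinear_tappend] tappend_bt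
          tlinear_tsub[OF tlinear_tprepend_list] tlinear_tscale[OF tlinear_tprepend_list] tprepend_list_bt
        by (intro ext) (simp add: tens_simps right_diff_distrib power_add)
    qed
    moreover have "?a + 2 = ?a + 1 + 1" "length ?P + 3 = Suc (Suc (1 + 2 * j))"
      "?a + 1 + 1 = s + int (2 * Suc j)" "Suc (Suc (1 + 2 * j)) = 1 + 2 * Suc j"
      by simp_all
    ultimately show ?case by (metis fock_null_tadd)
  qed
  fix n
  let ?w = "tscale (qq ^ (3 * n)) (bt (vac_list g s (2 * n) @ [y]))"
  have "?w \<in> Ltens (1 + 2 * n)"
    using y valid_vac_list[of g s "2 * n"] by (intro Ltens_tscale Ltens_bt) (simp_all add: valid_def)
  moreover have "tsub (append_vac g s (2 * n) (bt [y])) (tscale (qq ^ n) ?w) = X n"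
    unfolding X_def append_vac_bt by (rule ext) (simp add: tens_simps power_add[symmetric])
  ultimately show "\<exists>k w. w \<in> Ltens (1 + k) \<and>
      fock_null g (s + int k) (1 + k) (tsub (append_vac g s k (bt [y])) (tscale (qq ^ n) w))"
    using X[of n] by (intro exI[of _ "2 * n"] exI[of _ ?w]) simp
qed

section \<open>Exchange relations\<close>

definition lower_span :: "(bas \<Rightarrow> bool) \<Rightarrow> tens set" where
  "lower_span P = span_over Areg {bt [x, y'] | x y'. snd x \<le> 2 \<and> P y'}"

definition exchange_rel :: "gseq \<Rightarrow> int \<Rightarrow> bas \<Rightarrow> K \<Rightarrow> (bas \<Rightarrow> bool) \<Rightarrow> bool" where
  "exchange_rel g s y c P \<longleftrightarrow> (\<exists>l\<in>lower_span P. tsub (exch g s y c) l \<in> Nsp)"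

lemma lower_span_bt: "snd x \<le> 2 \<Longrightarrow> P y' \<Longrightarrow> bt [x, y'] \<in> lower_span P"
  unfolding lower_span_def by (rule span_base) blast

lemma lower_span_tzero: "tzero \<in> lower_span P"
  unfolding lower_span_def by (rule span_zero)

lemma lower_span_tadd: "x \<in> lower_span P \<Longrightarrow> y \<in> lower_span P \<Longrightarrow> tadd x y \<in> lower_span P"
  unfolding lower_span_def by (rule span_add)

lemma lower_span_tscale: "c \<in> Areg \<Longrightarrow> x \<in> lower_span P \<Longrightarrow> tscale c x \<in> lower_span P"
  unfolding lower_span_def by (rule span_scale)

lemma lower_span_tsub: "x \<in> lower_span P \<Longrightarrow> y \<in> lower_span P \<Longrightarrow> tsub x y \<in> lower_span P"
  unfolding lower_span_def by (rule span_over_tsub) simp_all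

lemma exchange_relI: "tsub (exch g s y c) l \<in> Nsp \<Longrightarrow> l \<in> lower_span P \<Longrightarrow> exchange_rel g s y c P"
  unfolding exchange_rel_def by blast

lemma exchange_rel_of_Nsp: "exch g s y c \<in> Nsp \<Longrightarrow> exchange_rel g s y c P"
proof -
  have "tsub x tzero = x" for x by (rule ext) (simp add: tens_simps)
  then show "exch g s y c \<in> Nsp \<Longrightarrow> exchange_rel g s y c P"
    by (metis exchange_relI lower_span_tzero)
qed

lemma fock_null_lower_span:
  assumes "l \<in> lower_span P" "\<And>y'. P y' \<Longrightarrow> fock_null g s 1 (bt [y'])"
  shows "fock_null g s 2 l"
  using assms(1) unfolding lower_span_def
proof induction
  case (span_base x)
  then obtain a y' where "x = bt [a, y']" "snd a \<le> 2" "P y'" by auto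
  then show ?case
    using fock_null_tprepend[OF assms(2)[of y'], of a] by (simp add: tprepend_bt numeral_2_eq_2)
qed (simp_all add: fock_null_tzero fock_null_tadd fock_null_tscale)

lemma fock_null_exch:
  assumes "exchange_rel g s y c P" "\<And>y'. P y' \<Longrightarrow> fock_null g (s + 1) 1 (bt [y'])"
  shows "fock_null g (s + 1) 2 (exch g s y c)"
proof -
  obtain l where "l \<in> lower_span P" "tsub (exch g s y c) l \<in> Nsp"
    using assms(1) unfolding exchange_rel_def by blast
  then show ?thesis
    using fock_null_congruent Nsp_subset_Nn_2 fock_null_lower_span assms(2) by blast
qed

definition zshift :: "bas \<Rightarrow> bas" where
  "zshift b = (fst b + 1, snd b)"

lemma zsum2_pair: "zsum2 [a, b] = tadd (bt [zshift a, b]) (bt [a, zshift b])"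
  by (simp add: zsum2_def zshift_def)

lemma lower_span_zsum:
  assumes "l \<in> lower_span P" "\<And>y'. P y' \<Longrightarrow> Q y' \<and> Q (zshift y')"
  shows "lin_ext zsum2 l \<in> lower_span Q"
proof -
  have "lin_ext zsum2 (bt [a, y']) \<in> lower_span Q" if "snd a \<le> 2" "P y'" for a y'
    using that assms(2)[of y'] unfolding zsum2_pair lin_ext_bt
    by (intro lower_span_tadd lower_span_bt) (simp_all add: zshift_def)
  with assms(1) show ?thesis
    unfolding lower_span_def by (elim lin_ext_span_over[rotated 2]) auto
qed

text \<open>Applying z \<otimes> 1 + 1 \<otimes> z raises y to zy; the cross terms y \<otimes> z v\<degree>_s and z v\<degree>_s \<otimes> y become
  new correction terms.\<close>

lemma exchange_rel_zshift:
  assumes rel: "exchange_rel g s y c P" and c: "c \<in> Areg" and y: "snd y \<le> 2"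
    and Q: "Q y" "Q (zshift (bcirc g s))" and PQ: "\<And>y'. P y' \<Longrightarrow> Q y' \<and> Q (zshift y')"
  shows "exchange_rel g s (zshift y) c Q"
proof -
  let ?v = "bcirc g s"
  obtain l where l: "l \<in> lower_span P" and N: "tsub (exch g s y c) l \<in> Nsp"
    using rel unfolding exchange_rel_def by blast
  have fin_l: "fin_supp l"
    using l unfolding lower_span_def by (rule fin_supp_span_over[rotated]) auto
  define l' where "l' = tadd (tsub (lin_ext zsum2 l) (bt [y, zshift ?v])) (tscale c (bt [zshift ?v, y]))"
  have "l' \<in> lower_span Q"
    unfolding l'_def using lower_span_zsum[of l P Q, OF l PQ] Q y c
    by (intro lower_span_tadd lower_span_tsub lower_span_tscale lower_span_bt) (simp_all add: zshift_def)
  moreover have "lin_ext zsum2 (tsub (exch g s y c) l) = tsub (exch g s (zshift y) c) l'"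
    unfolding l'_def exch_def using fin_l
    by (simp add: lin_ext_tsub lin_ext_tscale zsum2_pair) (rule ext, simp add: tens_simps algebra_simps)
  moreover have "lin_ext zsum2 (tsub (exch g s y c) l) \<in> Nsp"
    by (rule N_zsum[OF N])
  ultimately show ?thesis by (metis exchange_relI)
qed

definition zrank :: "bas \<Rightarrow> int" where
  "zrank y = 3 * fst y + 2 - int (snd y)"

definition below :: "gseq \<Rightarrow> int \<Rightarrow> bas \<Rightarrow> bas \<Rightarrow> bool" where
  "below g s y y' \<longleftrightarrow> snd y' \<le> 2 \<and> energy y' (bcirc g (s + 1)) \<le> 0 \<and> zrank y' < zrank y"

lemma energy_zshift: "energy (zshift y) b = energy y b - 1"
  by (cases y; cases b) (simp add: energy_def zshift_def)

lemma energy_antimono: "a \<le> a' \<Longrightarrow> energy (a', i) b \<le> energy (a, i) b"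
  by (cases b) (simp add: energy_def)

lemma exchange_rel_upwards:
  assumes start: "exchange_rel g s (a0, i) c (below g s (a0, i))"
    and c: "c \<in> Areg" and i: "i \<le> 2"
    and adm: "energy (a0, i) (bcirc g (s + 1)) \<le> 0"
    and adm_vac: "energy (zshift (bcirc g s)) (bcirc g (s + 1)) \<le> 0"
    and rank_vac: "zrank (zshift (bcirc g s)) < zrank (a0 + 1, i)"
    and "a0 \<le> a"
  shows "exchange_rel g s (a, i) c (below g s (a, i))"
  using \<open>a0 \<le> a\<close>
proof (induction a rule: int_ge_induct)
  case base
  then show ?case by (rule start)
next
  case (step a)
  have "exchange_rel g s (zshift (a, i)) c (below g s (a + 1, i))"
  proof (rule exchange_rel_zshift[OF step.IH c])
    show "snd (a, i) \<le> 2" using i by simp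
    show "below g s (a + 1, i) (a, i)"
      using i order_trans[OF energy_antimono[OF step.hyps] adm] by (simp add: below_def zrank_def)
    show "below g s (a + 1, i) (zshift (bcirc g s))"
      using adm_vac rank_vac step.hyps by (simp add: below_def zrank_def zshift_def)
    show "below g s (a + 1, i) y' \<and> below g s (a + 1, i) (zshift y')" if "below g s (a, i) y'" for y'
      using that energy_zshift[of y' "bcirc g (s + 1)"] by (simp add: below_def zrank_def zshift_def)
  qed
  then show ?case by (simp add: zshift_def)
qed

section \<open>Elements of N\<close>

lemma list_eq_pair_iff: "ys = [b, b'] \<longleftrightarrow> length ys = 2 \<and> ys ! 0 = b \<and> ys ! 1 = b'"
  by (cases ys; cases "tl ys") auto

lemma tp2_s1_d1: "tp2 (s1 c (d1 b)) (d1 b') = tscale c (bt [b, b'])"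
  by (rule ext) (auto simp: tp2_def s1_def d1_def bt_def tscale_def list_eq_pair_iff)

lemma tp2_d1_s1: "tp2 (d1 b) (s1 c (d1 b')) = tscale c (bt [b, b'])"
  by (rule ext) (auto simp: tp2_def s1_def d1_def bt_def tscale_def list_eq_pair_iff)

lemma tp2_zero_left: "tp2 (\<lambda>_. 0) w = tzero"
  by (rule ext) (simp add: tp2_def tzero_def)

lemma tp2_zero_right: "tp2 u (\<lambda>_. 0) = tzero"
  by (rule ext) (simp add: tp2_def tzero_def)

lemma F2_pair:
  "F2 i [b, b'] =
    tadd (tscale (qq powi pair_wt (hcor i) b') (tp2 (fV i b) (d1 b'))) (tp2 (d1 b) (fV i b'))"
  by (simp add: F2_def)

lemma E2_pair:
  "E2 i [b, b'] =
    tadd (tp2 (eV i b) (d1 b')) (tscale (qq powi (- pair_wt (hcor i) b)) (tp2 (d1 b) (eV i b')))"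
  by (simp add: E2_def)

lemma zz2_pair: "zz2 s [b, b'] = bt [(fst b + s, snd b), (fst b' + s, snd b')]"
  by (simp add: zz2_def)

lemmas action_simps = F2_pair E2_pair zz2_pair zsum2_pair zshift_def fV_def eV_def pair_wt_def hcor_def
  tp2_s1_d1 tp2_d1_s1 tp2_zero_left tp2_zero_right qint_1 qint_2 qint_3
  lin_ext_tadd lin_ext_tscale lin_ext_tsub power_int_minus

lemma Nsp_tscale_cancel: "tscale c x \<in> Nsp \<Longrightarrow> c \<noteq> 0 \<Longrightarrow> x \<in> Nsp"
proof -
  assume "tscale c x \<in> Nsp" "c \<noteq> 0"
  moreover have "tscale (inverse c) (tscale c x) = x"
    using \<open>c \<noteq> 0\<close> by (intro ext) (simp add: tens_simps)
  ultimately show ?thesis by (metis N_scale)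
qed

lemma Nsp_v0v1: "tadd (bt [(0,0),(0,1)]) (tscale (qq ^ 2) (bt [(0,1),(0,0)])) \<in> Nsp"
  (is "?w \<in> Nsp")
proof -
  have "lin_ext (F2 1) (bt [(0,0),(0,0)]) = ?w"
    by (simp add: action_simps) (rule ext, simp add: tens_simps)
  then show ?thesis using N_f[OF _ N_gen, of 1] by simp
qed

lemma Nsp_v0v2:
  "tadd (bt [(0,0),(0,2)]) (tadd (tscale qq (bt [(0,1),(0,1)])) (tscale (qq ^ 4) (bt [(0,2),(0,0)]))) \<in> Nsp"
  (is "?w \<in> Nsp")
proof -
  have "lin_ext (F2 1) (tadd (bt [(0,0),(0,1)]) (tscale (qq ^ 2) (bt [(0,1),(0,0)]))) = tscale (qint 2) ?w"
    by (simp add: action_simps) (rule ext, auto simp: tens_simps bt_def field_simps; algebra)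
  then show ?thesis using N_f[OF _ Nsp_v0v1, of 1] qint_2_ne_0 by (auto intro: Nsp_tscale_cancel)
qed

lemma Nsp_v1v2: "tadd (bt [(0,1),(0,2)]) (tscale (qq ^ 2) (bt [(0,2),(0,1)])) \<in> Nsp"
  (is "?w \<in> Nsp")
proof -
  have "lin_ext (F2 1)
      (tadd (bt [(0,0),(0,2)]) (tadd (tscale qq (bt [(0,1),(0,1)])) (tscale (qq ^ 4) (bt [(0,2),(0,0)])))) =
      tscale (qint 3) ?w"
    by (simp add: action_simps) (rule ext, auto simp: tens_simps bt_def field_simps; algebra)
  then show ?thesis using N_f[OF _ Nsp_v0v2, of 1] qint_3_ne_0 by (auto intro: Nsp_tscale_cancel)
qed

lemma Nsp_v2v2: "bt [(0,2),(0,2)] \<in> Nsp"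
proof -
  have "qq ^ 2 + inverse (qq ^ 2) \<noteq> 0"
  proof
    assume "qq ^ 2 + inverse (qq ^ 2) = 0"
    moreover have "(qq ^ 2 + inverse (qq ^ 2)) * qq ^ 2 = qq ^ 4 + 1" by (simp add: field_simps; algebra)
    ultimately show False using qq_power_add_1_ne_0[of 4] by simp
  qed
  then have "qint 2 * (qq ^ 2 + inverse (qq ^ 2)) \<noteq> 0" using qint_2_ne_0 by simp
  moreover have "lin_ext (F2 1) (tadd (bt [(0,1),(0,2)]) (tscale (qq ^ 2) (bt [(0,2),(0,1)]))) =
      tscale (qint 2 * (qq ^ 2 + inverse (qq ^ 2))) (bt [(0,2),(0,2)])"
    by (simp add: action_simps) (rule ext, auto simp: tens_simps bt_def field_simps; algebra)
  ultimately show ?thesis using N_f[OF _ Nsp_v1v2, of 1] by (auto intro: Nsp_tscale_cancel)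
qed

lemma Nsp_zv1v0: "tadd (bt [(1,1),(0,0)]) (tscale (qq ^ 2) (bt [(0,0),(1,1)])) \<in> Nsp"
  (is "?w \<in> Nsp")
proof -
  have "lin_ext (E2 0) (bt [(0,0),(0,0)]) = ?w"
    by (simp add: action_simps) (rule ext, auto simp: tens_simps bt_def field_simps; algebra)
  then show ?thesis using N_e[OF _ N_gen, of 0] by simp
qed

lemma Nsp_z2v2v0:
  "tadd (bt [(2,2),(0,0)]) (tadd (tscale qq (bt [(1,1),(1,1)])) (tscale (qq ^ 4) (bt [(0,0),(2,2)]))) \<in> Nsp"
  (is "?w \<in> Nsp")
proof -
  have "lin_ext (E2 0) (tadd (bt [(1,1),(0,0)]) (tscale (qq ^ 2) (bt [(0,0),(1,1)]))) = tscale (qint 2) ?w"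
    by (simp add: action_simps) (rule ext, auto simp: tens_simps bt_def field_simps; algebra)
  then show ?thesis using N_e[OF _ Nsp_zv1v0, of 0] qint_2_ne_0 by (auto intro: Nsp_tscale_cancel)
qed

lemma Nsp_zv1v1:
  "tadd (tadd (bt [(1,1),(0,1)]) (tscale (qq ^ 2) (bt [(0,1),(1,1)])))
     (tscale (qq + qq ^ 3) (tadd (bt [(0,0),(1,2)]) (bt [(1,2),(0,0)]))) \<in> Nsp"
  (is "?w \<in> Nsp")
proof -
  have "lin_ext (F2 1) (tadd (bt [(1,1),(0,0)]) (tscale (qq ^ 2) (bt [(0,0),(1,1)]))) = ?w"
    by (simp add: action_simps) (rule ext, auto simp: tens_simps bt_def field_simps; algebra)
  then show ?thesis using N_f[OF _ Nsp_zv1v0, of 1] by simp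
qed

lemma Nsp_zv2v1: "tadd (bt [(1,2),(0,1)]) (tscale (qq ^ 2) (bt [(0,1),(1,2)])) \<in> Nsp"
  (is "?w \<in> Nsp")
proof -
  let ?v02 =
    "tadd (bt [(0,0),(0,2)]) (tadd (tscale qq (bt [(0,1),(0,1)])) (tscale (qq ^ 4) (bt [(0,2),(0,0)])))"
  let ?v12 = "tadd (bt [(0,1),(0,2)]) (tscale (qq ^ 2) (bt [(0,2),(0,1)]))"
  have "tsub (lin_ext (E2 0) ?v02) (lin_ext zsum2 ?v12) \<in> Nsp"
    unfolding tsub_eq_tadd_tscale using N_e[OF _ Nsp_v0v2, of 0] N_zsum[OF Nsp_v1v2]
    by (simp add: N_add N_scale)
  moreover have "tsub (lin_ext (E2 0) ?v02) (lin_ext zsum2 ?v12) = ?w"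
    by (simp add: action_simps) (rule ext, auto simp: tens_simps bt_def field_simps; algebra)
  ultimately show ?thesis by simp
qed

lemma Nsp_zv0zv2:
  "tadd (bt [(1,0),(1,2)]) (tadd (tscale qq (bt [(1,1),(1,1)])) (tscale (qq ^ 4) (bt [(1,2),(1,0)]))) \<in> Nsp"
  using N_z[OF Nsp_v0v2] by (simp add: action_simps)

lemma Nsp_zv1zv2: "tadd (bt [(1,1),(1,2)]) (tscale (qq ^ 2) (bt [(1,2),(1,1)])) \<in> Nsp"
  using N_z[OF Nsp_v1v2] by (simp add: action_simps)

lemma Nsp_zv2zv2: "bt [(1,2),(1,2)] \<in> Nsp"
  using N_z[OF Nsp_v2v2] by (simp add: action_simps)

lemma Nsp_z2v2zv2: "tadd (bt [(2,2),(1,2)]) (bt [(1,2),(2,2)]) \<in> Nsp"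
  using N_zsum[OF Nsp_zv2zv2] by (simp add: action_simps)

lemma Nsp_zv0v0: "tadd (bt [(1,0),(0,0)]) (bt [(0,0),(1,0)]) \<in> Nsp"
  using N_zsum[OF N_gen] by (simp add: action_simps)

definition exch_coeff :: "gseq \<Rightarrow> int \<Rightarrow> nat \<Rightarrow> K" where
  "exch_coeff g s i = (case g of
      GS_A \<Rightarrow> if even s then - (qq ^ (4 - 2 * i)) else - (qq ^ (2 * i))
    | GS_B \<Rightarrow> - (qq ^ 2))"

lemma Areg_exch_coeff [simp]: "exch_coeff g s i \<in> Areg"
  by (cases g) (simp_all add: exch_coeff_def)

lemma exch_coeff_mult: "i \<le> 2 \<Longrightarrow> exch_coeff g s i * exch_coeff g (s + 1) i = qq ^ 4"
  by (cases g) (auto simp: exch_coeff_def power_add[symmetric])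

lemma bcirc_B [simp]: "bcirc GS_B s = (0, 1)"
  by (simp add: bcirc_def)

lemma bcirc_A_even [simp]: "even s \<Longrightarrow> bcirc GS_A s = (1, 2)"
  by (simp add: bcirc_def)

lemma bcirc_A_odd [simp]: "odd s \<Longrightarrow> bcirc GS_A s = (0, 0)"
  by (simp add: bcirc_def)

lemma exchange_rel_one_lower:
  "tsub (exch g s y c) (tscale d (bt [x, y'])) \<in> Nsp \<Longrightarrow> d \<in> Areg \<Longrightarrow> snd x \<le> 2 \<Longrightarrow> P y'
    \<Longrightarrow> exchange_rel g s y c P"
  by (blast intro: exchange_relI lower_span_tscale lower_span_bt)

lemma exchange_rel_B_start:
  assumes "i \<le> 2"
  shows "exchange_rel GS_B s (int (min i 1), i) (exch_coeff GS_B s i) (below GS_B s (int (min i 1), i))"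
proof -
  consider "i = 0" | "i = 1" | "i = 2" using assms by linarith
  then show ?thesis
  proof cases
    case 1
    have "exch GS_B s (0, 0) (exch_coeff GS_B s 0) =
        tadd (bt [(0,0),(0,1)]) (tscale (qq ^ 2) (bt [(0,1),(0,0)]))"
      by (rule ext) (simp add: exch_def exch_coeff_def tens_simps)
    with 1 Nsp_v0v1 show ?thesis by (simp add: exchange_rel_of_Nsp)
  next
    case 2
    let ?l = "tscale (- (qq + qq ^ 3)) (tadd (bt [(0,0),(1,2)]) (bt [(1,2),(0,0)]))"
    have "?l \<in> lower_span (below GS_B s (1, 1))"
      by (intro lower_span_tscale lower_span_tadd lower_span_bt)
        (simp_all add: below_def energy_def zrank_def)
    moreover have "tsub (exch GS_B s (1, 1) (exch_coeff GS_B s 1)) ?l =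
        tadd (tadd (bt [(1,1),(0,1)]) (tscale (qq ^ 2) (bt [(0,1),(1,1)])))
          (tscale (qq + qq ^ 3) (tadd (bt [(0,0),(1,2)]) (bt [(1,2),(0,0)])))"
      by (rule ext) (simp add: exch_def exch_coeff_def tens_simps algebra_simps)
    ultimately have "exchange_rel GS_B s (1, 1) (exch_coeff GS_B s 1) (below GS_B s (1, 1))"
      using Nsp_zv1v1 by (metis exchange_relI)
    with 2 show ?thesis by simp
  next
    case 3
    have "exch GS_B s (1, 2) (exch_coeff GS_B s 2) =
        tadd (bt [(1,2),(0,1)]) (tscale (qq ^ 2) (bt [(0,1),(1,2)]))"
      by (rule ext) (simp add: exch_def exch_coeff_def tens_simps)
    with 3 Nsp_zv2v1 show ?thesis by (simp add: exchange_rel_of_Nsp)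
  qed
qed

lemma exchange_rel_A_start:
  assumes "i \<le> 2"
  shows "exchange_rel GS_A s (int (max 1 i), i) (exch_coeff GS_A s i) (below GS_A s (int (max 1 i), i))"
proof -
  consider "i = 0" | "i = 1" | "i = 2" using assms by linarith
  then show ?thesis
  proof cases
    case 1
    show ?thesis
    proof (cases "even s")
      case True
      have "tsub (exch GS_A s (1, 0) (exch_coeff GS_A s 0)) (tscale (- qq) (bt [(1,1),(1,1)])) =
          tadd (bt [(1,0),(1,2)]) (tadd (tscale qq (bt [(1,1),(1,1)])) (tscale (qq ^ 4) (bt [(1,2),(1,0)])))"
        using True by (intro ext) (simp add: exch_def exch_coeff_def tens_simps algebra_simps)
      moreover have "below GS_A s (1, 0) (1, 1)"
        using True by (simp add: below_def energy_def zrank_def)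
      ultimately show ?thesis
        using 1 Nsp_zv0zv2 by (intro exchange_rel_one_lower[where d = "- qq" and x = "(1, 1)"]) simp_all
    next
      case False
      have "exch GS_A s (1, 0) (exch_coeff GS_A s 0) = tadd (bt [(1,0),(0,0)]) (bt [(0,0),(1,0)])"
        using False by (intro ext) (simp add: exch_def exch_coeff_def tens_simps)
      with 1 Nsp_zv0v0 show ?thesis by (simp add: exchange_rel_of_Nsp)
    qed
  next
    case 2
    show ?thesis
    proof (cases "even s")
      case True
      have "exch GS_A s (1, 1) (exch_coeff GS_A s 1) =
          tadd (bt [(1,1),(1,2)]) (tscale (qq ^ 2) (bt [(1,2),(1,1)]))"
        using True by (intro ext) (simp add: exch_def exch_coeff_def tens_simps)
      with 2 Nsp_zv1zv2 show ?thesis by (simp add: exchange_rel_of_Nsp)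
    next
      case False
      have "exch GS_A s (1, 1) (exch_coeff GS_A s 1) =
          tadd (bt [(1,1),(0,0)]) (tscale (qq ^ 2) (bt [(0,0),(1,1)]))"
        using False by (intro ext) (simp add: exch_def exch_coeff_def tens_simps)
      with 2 Nsp_zv1v0 show ?thesis by (simp add: exchange_rel_of_Nsp)
    qed
  next
    case 3
    show ?thesis
    proof (cases "even s")
      case True
      have "exch GS_A s (2, 2) (exch_coeff GS_A s 2) = tadd (bt [(2,2),(1,2)]) (bt [(1,2),(2,2)])"
        using True by (intro ext) (simp add: exch_def exch_coeff_def tens_simps)
      with 3 Nsp_z2v2zv2 show ?thesis by (simp add: exchange_rel_of_Nsp)
    next
      case False
      have "tsub (exch GS_A s (2, 2) (exch_coeff GS_A s 2)) (tscale (- qq) (bt [(1,1),(1,1)])) =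
          tadd (bt [(2,2),(0,0)]) (tadd (tscale qq (bt [(1,1),(1,1)])) (tscale (qq ^ 4) (bt [(0,0),(2,2)])))"
        using False by (intro ext) (simp add: exch_def exch_coeff_def tens_simps algebra_simps)
      moreover have "below GS_A s (2, 2) (1, 1)"
        using False by (simp add: below_def energy_def zrank_def)
      ultimately show ?thesis
        using 3 Nsp_z2v2v0 by (intro exchange_rel_one_lower[where d = "- qq" and x = "(1, 1)"]) simp_all
    qed
  qed
qed

text \<open>The least power a of z for which z^a b_i is admissible and not a ground state element, for every s.\<close>

definition exch_start :: "gseq \<Rightarrow> nat \<Rightarrow> int" where
  "exch_start g i = (case g of GS_A \<Rightarrow> int (max 1 i) | GS_B \<Rightarrow> int (min i 1))"

lemma energy_exch_start: "i \<le> 2 \<Longrightarrow> energy (exch_start g i, i) (bcirc g s) \<le> 0"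
  by (cases g) (auto simp: energy_def bcirc_def exch_start_def)

lemma energy_zshift_bcirc: "energy (zshift (bcirc g s)) (bcirc g (s + 1)) \<le> 0"
  by (cases g; cases "even s") (simp_all add: energy_def zshift_def)

lemma zrank_zshift_bcirc: "i \<le> 2 \<Longrightarrow> zrank (zshift (bcirc g s)) < zrank (exch_start g i + 1, i)"
  by (cases g; cases "even s") (auto simp: zrank_def zshift_def exch_start_def)

lemma exchange_rel_admissible:
  assumes "snd y \<le> 2" "energy y (bcirc g s) \<le> 0" "y \<noteq> bcirc g s"
  shows "exchange_rel g s' y (exch_coeff g s' (snd y)) (below g s' y)"
proof -
  obtain a i where y: "y = (a, i)" by force
  have i: "i \<le> 2" using assms(1) y by simp
  have start: "exchange_rel g s' (exch_start g i, i) (exch_coeff g s' i) (below g s' (exch_start g i, i))"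
    using exchange_rel_A_start[OF i] exchange_rel_B_start[OF i] by (cases g) (simp_all add: exch_start_def)
  have "exch_start g i \<le> a"
    using assms y by (cases g) (auto simp: energy_def bcirc_def exch_start_def split: if_splits)
  then show ?thesis
    unfolding y snd_conv
    by (rule exchange_rel_upwards[OF start Areg_exch_coeff i energy_exch_start[OF i] energy_zshift_bcirc
          zrank_zshift_bcirc[OF i]])
qed

lemma Nsp_bcirc_bcirc: "energy (bcirc g s) (bcirc g s) \<le> 0 \<Longrightarrow> bt [bcirc g s, bcirc g s] \<in> Nsp"
  by (cases g) (auto simp: bcirc_def energy_def N_gen Nsp_zv2zv2)

lemma fock_null_of_Nsp:
  assumes "bt [y, bcirc g s] \<in> Nsp"
  shows "fock_null g s 1 (bt [y])"
proof -
  have "fock_null g (s + 1) 2 (bt [y, bcirc g s])"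
    by (rule fock_null_Nn[OF Nsp_subset_Nn_2[OF assms]])
  then have "fock_null g (s + 1) (Suc 1) (tappend (bt [y]) (bcirc g s))"
    unfolding tappend_bt by (simp add: numeral_2_eq_2)
  then show ?thesis by (simp only: fock_null_tappend_bcirc)
qed

lemma zrank_nonneg: "snd y \<le> 2 \<Longrightarrow> energy y (bcirc g s) \<le> 0 \<Longrightarrow> 0 \<le> zrank y"
  by (cases y; cases g) (auto simp: energy_def bcirc_def zrank_def split: if_splits)

lemma fock_null_admissible:
  assumes "snd y \<le> 2" "energy y (bcirc g s) \<le> 0"
  shows "fock_null g s 1 (bt [y])"
  using assms
proof (induction "nat (zrank y)" arbitrary: y s rule: less_induct)
  case less
  show ?case
  proof (cases "y = bcirc g s")
    case True
    then show ?thesis using less.prems by (metis fock_null_of_Nsp Nsp_bcirc_bcirc)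
  next
    case False
    have lower: "fock_null g (s' + 1) 1 (bt [y'])" if "below g s' y y'" for s' y'
    proof (rule less.hyps)
      show "snd y' \<le> 2" "energy y' (bcirc g (s' + 1)) \<le> 0" using that by (simp_all add: below_def)
      then show "nat (zrank y') < nat (zrank y)"
        using that zrank_nonneg[of y' g "s' + 1"] by (auto simp: below_def)
    qed
    show ?thesis
    proof (rule fock_null_of_exch)
      show "fock_null g (s' + 1) 2 (exch g s' y (exch_coeff g s' (snd y)))" for s'
        using exchange_rel_admissible[OF less.prems False] lower by (rule fock_null_exch)
      show "exch_coeff g s' (snd y) * exch_coeff g (s' + 1) (snd y) = qq ^ 4" for s'
        using less.prems(1) by (rule exch_coeff_mult)
    qed (simp_all add: less.prems)
  qed
qed

theorem mainTheorem6:
  fixes g :: gseq and m :: int and b :: bas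
  assumes "snd b \<le> 2"
    and "energy b (bcirc g m) \<le> 0"
  shows "\<forall>n::nat. n > 0 \<longrightarrow> in_qL_Fbar g (m - 1) n 1 (bt [b])"
proof (intro allI impI)
  fix n :: nat
  have "fock_null g (m - 1 + int 1) 1 (bt [b])"
    using fock_null_admissible[OF assms] by simp
  then show "in_qL_Fbar g (m - 1) n 1 (bt [b])"
    by (rule in_qL_Fbar_if_fock_null)
qed

end
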